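(* Let $\mathcal{G}$ be a class of graphs closed under taking subgraphs. The following are equivalent: (i) there exists $d\in\mathbb{N}$ such that every graph $G\in\mathcal{G}$ is strongly $d$-degenerate; (ii) there exist $s\in\mathbb{N}$ and $k\in\mathbb{N}$ such that $K_{2,s}\notin\mathcal{G}$ and such that for every graph $H$ of minimum degree at least $k$, the $1$-subdivision of $H$ is not contained in $\mathcal{G}$.
   Context: All graphs are finite and simple. For an integer $d\ge1$, a vertex $v$ of a graph $G$ is $d$-removable in $G$ if $d_G(v)\le d$ and at most one neighbour $w$ of $v$ has $d_G(w)>d$. A graph $G$ is strongly $d$-degenerate if every non-empty subgraph $G'$ of $G$ contains a vertex which is $d$-removable in $G'$. The $1$-subdivision of $H$ is the graph obtained by replacing every edge of $H$ by a path of length $2$ through a new vertex. Membership in $\mathcal{G}$ is understood up to isomorphism. *)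

theory Defs
  imports Main
begin

text \<open>A finite simple graph on natural-number vertices: a pair (V, E) where V is a finite
  vertex set and E is a set of 2-element subsets of V.  Every finite graph is isomorphic to
  such a graph, and all notions below are invariant under isomorphism.\<close>

type_synonym graph = "nat set \<times> nat set set"

definition verts :: "graph \<Rightarrow> nat set" where "verts G = fst G"
definition edges :: "graph \<Rightarrow> nat set set" where "edges G = snd G"

definition wf_graph :: "graph \<Rightarrow> bool" where
  "wf_graph G \<longleftrightarrow> finite (verts G) \<and>
     (\<forall>e\<in>edges G. \<exists>u v. u \<noteq> v \<and> e = {u, v} \<and> u \<in> verts G \<and> v \<in> verts G)"

definition nbrs :: "graph \<Rightarrow> nat \<Rightarrow> nat set" where
  "nbrs G v = {u. {v, u} \<in> edges G}"

definition degree :: "graph \<Rightarrow> nat \<Rightarrow> nat" where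
  "degree G v = card (nbrs G v)"

definition subgraph :: "graph \<Rightarrow> graph \<Rightarrow> bool" where
  "subgraph H G \<longleftrightarrow> wf_graph H \<and> verts H \<subseteq> verts G \<and> edges H \<subseteq> edges G"

definition graph_iso :: "graph \<Rightarrow> graph \<Rightarrow> bool" where
  "graph_iso G H \<longleftrightarrow> (\<exists>f. bij_betw f (verts G) (verts H) \<and>
      (\<forall>u\<in>verts G. \<forall>v\<in>verts G. {u, v} \<in> edges G \<longleftrightarrow> {f u, f v} \<in> edges H))"

definition removable :: "nat \<Rightarrow> graph \<Rightarrow> nat \<Rightarrow> bool" where
  "removable d G v \<longleftrightarrow> v \<in> verts G \<and> degree G v \<le> d \<and>
     card {w \<in> nbrs G v. degree G w > d} \<le> 1"

definition strongly_degenerate :: "nat \<Rightarrow> graph \<Rightarrow> bool" where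
  "strongly_degenerate d G \<longleftrightarrow>
     (\<forall>G'. subgraph G' G \<and> verts G' \<noteq> {} \<longrightarrow> (\<exists>v\<in>verts G'. removable d G' v))"

definition is_K2s :: "nat \<Rightarrow> graph \<Rightarrow> bool" where
  "is_K2s s G \<longleftrightarrow> (\<exists>A B. verts G = A \<union> B \<and> A \<inter> B = {} \<and> card A = 2 \<and> finite B \<and>
      card B = s \<and> edges G = {{a, b} | a b. a \<in> A \<and> b \<in> B})"

definition is_subdivision_of :: "graph \<Rightarrow> graph \<Rightarrow> bool" where
  "is_subdivision_of S H \<longleftrightarrow> (\<exists>f g. inj_on f (verts H) \<and> inj_on g (edges H) \<and>
      f ` verts H \<inter> g ` edges H = {} \<and> verts S = f ` verts H \<union> g ` edges H \<and>
      edges S = {{f u, g e} | u e. e \<in> edges H \<and> u \<in> e})"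

definition min_degree_at_least :: "nat \<Rightarrow> graph \<Rightarrow> bool" where
  "min_degree_at_least k H \<longleftrightarrow> verts H \<noteq> {} \<and> (\<forall>v\<in>verts H. degree H v \<ge> k)"

definition subgraph_closed :: "graph set \<Rightarrow> bool" where
  "subgraph_closed \<G> \<longleftrightarrow> (\<forall>G\<in>\<G>. wf_graph G) \<and>
     (\<forall>G\<in>\<G>. \<forall>G'. subgraph G' G \<longrightarrow> (\<exists>G''\<in>\<G>. graph_iso G' G''))"

end

(*
  In K_{2,d+1}, and in the 1-subdivision of a graph of minimum degree d+1, every vertex of
  degree at most d has two neighbours of degree more than d, so no vertex is d-removable.

  Conversely let d = 32 (sk+2)^3 and consider a graph without d-removable vertices; call its
  vertices of degree more than d big. Every other vertex has two big neighbours. Whenever each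
  vertex of a set Y picks two of its neighbours in a disjoint set X and |Y| > (s-1) k |X|,
  either s vertices pick the same pair, which gives K_{2,s}, or the picked pairs form a graph
  on X with more than k |X| edges; that graph has a subgraph of minimum degree k, whose
  1-subdivision is realised by the picking vertices. If the small vertices outnumber the big
  ones by the factor sk+1, take X = big and Y = small. Otherwise the big vertices form a
  1/(sk+2) fraction of all vertices and have degree more than d, so greedy domination finds
  a set X of at most |big|/(sk+2) vertices meeting every big vertex's neighbourhood twice,
  and Y = big - X.
*)

theory Submission
  imports Defs
begin

lemma verts_pair [simp]: "verts (V, E) = V"
  by (simp add: verts_def)

lemma edges_pair [simp]: "edges (V, E) = E"
  by (simp add: edges_def)

lemma wf_graph_finite_verts: "wf_graph G \<Longrightarrow> finite (verts G)"
  by (simp add: wf_graph_def)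

lemma wf_graph_edgeE:
  assumes "wf_graph G" "e \<in> edges G"
  obtains u v where "u \<noteq> v" "e = {u, v}" "u \<in> verts G" "v \<in> verts G"
  using assms unfolding wf_graph_def by blast

lemma wf_graph_nbrs_subset: "wf_graph G \<Longrightarrow> nbrs G v \<subseteq> verts G"
  unfolding wf_graph_def nbrs_def by (auto simp: doubleton_eq_iff)

lemma wf_graph_finite_nbrs: "wf_graph G \<Longrightarrow> finite (nbrs G v)"
  using wf_graph_nbrs_subset wf_graph_finite_verts finite_subset by metis

lemma wf_graph_not_in_nbrs: "wf_graph G \<Longrightarrow> v \<notin> nbrs G v"
  unfolding wf_graph_def nbrs_def by (auto simp: doubleton_eq_iff)

lemma wf_graph_edge_subset: "wf_graph G \<Longrightarrow> e \<in> edges G \<Longrightarrow> e \<subseteq> verts G"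
  by (auto elim: wf_graph_edgeE)

lemma wf_graph_finite_edges: "wf_graph G \<Longrightarrow> finite (edges G)"
  by (meson Pow_iff finite_Pow_iff finite_subset subsetI wf_graph_edge_subset wf_graph_finite_verts)

lemma subgraph_wf: "subgraph H G \<Longrightarrow> wf_graph H"
  by (simp add: subgraph_def)

lemma subgraph_refl: "wf_graph G \<Longrightarrow> subgraph G G"
  by (simp add: subgraph_def)

lemma subgraph_trans: "subgraph A B \<Longrightarrow> subgraph B C \<Longrightarrow> subgraph A C"
  unfolding subgraph_def by auto

lemma card_incident_edges:
  assumes "wf_graph G"
  shows "card {e \<in> edges G. v \<in> e} = degree G v"
proof -
  have "{e \<in> edges G. v \<in> e} = (\<lambda>u. {v, u}) ` nbrs G v"
  proof (intro equalityI subsetI)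
    fix e assume "e \<in> {e \<in> edges G. v \<in> e}"
    then obtain u where "e = {v, u}" "e \<in> edges G"
      using assms by (auto simp: doubleton_eq_iff insert_commute elim!: wf_graph_edgeE)
    then show "e \<in> (\<lambda>u. {v, u}) ` nbrs G v"
      by (auto simp: nbrs_def)
  qed (auto simp: nbrs_def)
  moreover have "inj_on (\<lambda>u. {v, u}) (nbrs G v)"
    by (rule inj_onI) (auto simp: doubleton_eq_iff)
  ultimately show ?thesis
    by (simp add: card_image degree_def)
qed

lemma delete_vertex:
  assumes "wf_graph G" "v \<in> verts G"
  shows "subgraph (verts G - {v}, {e \<in> edges G. v \<notin> e}) G"
    and "card (verts G - {v}) + 1 = card (verts G)"
    and "card (edges G) \<le> card {e \<in> edges G. v \<notin> e} + degree G v"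
proof -
  show "subgraph (verts G - {v}, {e \<in> edges G. v \<notin> e}) G"
    using assms(1) unfolding subgraph_def wf_graph_def by fastforce
  show "card (verts G - {v}) + 1 = card (verts G)"
    using assms by (metis Suc_eq_plus1 card_Suc_Diff1 wf_graph_finite_verts)
  have "edges G = {e \<in> edges G. v \<notin> e} \<union> {e \<in> edges G. v \<in> e}"
    by auto
  then show "card (edges G) \<le> card {e \<in> edges G. v \<notin> e} + degree G v"
    using card_Un_le card_incident_edges[OF assms(1)] by metis
qed

text \<open>Deleting a vertex of degree less than \<open>k\<close> keeps the edge density above \<open>k\<close>, so the
  deletion process stops at a non-empty subgraph of minimum degree at least \<open>k\<close>.\<close>
lemma dense_graph_has_min_degree_subgraph:
  assumes "wf_graph G" "k * card (verts G) < card (edges G)"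
  shows "\<exists>H. subgraph H G \<and> min_degree_at_least k H"
  using assms
proof (induction "card (verts G)" arbitrary: G rule: less_induct)
  case less
  show ?case
  proof (cases "min_degree_at_least k G")
    case True
    with less.prems show ?thesis by (blast intro: subgraph_refl)
  next
    case False
    have "verts G \<noteq> {}"
      using less.prems by (auto simp: wf_graph_def)
    with False obtain v where v: "v \<in> verts G" "degree G v < k"
      unfolding min_degree_at_least_def by (meson not_le)
    let ?G' = "(verts G - {v}, {e \<in> edges G. v \<notin> e})"
    note del = delete_vertex[OF less.prems(1) v(1)]
    have "k * card (verts G) = k * card (verts ?G') + k"
      by (simp flip: del(2))
    then have "k * card (verts ?G') < card (edges ?G')"
      using del(3) v(2) less.prems(2) by simp
    then obtain H where "subgraph H ?G'" "min_degree_at_least k H"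
      using less.hyps del(1,2) subgraph_wf by (metis less_add_one verts_pair)
    then show ?thesis
      using del(1) subgraph_trans by blast
  qed
qed

lemma K2s_subgraph:
  assumes "A \<union> T \<subseteq> verts G" "A \<inter> T = {}" "card A = 2" "finite T" "card T = s"
    and adj: "\<forall>a\<in>A. \<forall>b\<in>T. {a, b} \<in> edges G"
  shows "\<exists>K. subgraph K G \<and> is_K2s s K"
proof -
  let ?K = "(A \<union> T, {{a, b} | a b. a \<in> A \<and> b \<in> T})"
  have "finite A"
    using assms(3) by (simp add: card_ge_0_finite)
  moreover have "\<exists>u v. u \<noteq> v \<and> {a, b} = {u, v} \<and> u \<in> A \<union> T \<and> v \<in> A \<union> T"
    if "a \<in> A" "b \<in> T" for a b
    using that assms(2) by (intro exI[of _ a] exI[of _ b]) auto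
  ultimately have "wf_graph ?K"
    using assms(4) unfolding wf_graph_def by auto
  then have "subgraph ?K G"
    using assms(1) adj unfolding subgraph_def by auto
  moreover have "is_K2s s ?K"
    unfolding is_K2s_def using assms(2-5) by (intro exI[of _ A, OF exI[of _ T]]) simp
  ultimately show ?thesis
    by blast
qed

lemma subdivision_subgraph:
  assumes H: "wf_graph H" "verts H \<subseteq> verts G"
    and g: "inj_on g (edges H)" "g ` edges H \<subseteq> verts G - verts H"
    and adj: "\<forall>e\<in>edges H. \<forall>u\<in>e. {u, g e} \<in> edges G"
  shows "\<exists>S. subgraph S G \<and> is_subdivision_of S H"
proof -
  let ?S = "(verts H \<union> g ` edges H, {{u, g e} | u e. e \<in> edges H \<and> u \<in> e})"
  have "wf_graph ?S"
    unfolding wf_graph_def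
  proof (intro conjI ballI)
    show "finite (verts ?S)"
      using H(1) by (simp add: wf_graph_finite_verts wf_graph_finite_edges)
    fix x assume "x \<in> edges ?S"
    then obtain u e where ue: "x = {u, g e}" "e \<in> edges H" "u \<in> e"
      by auto
    then have "u \<in> verts H"
      using H(1) wf_graph_edge_subset by blast
    with ue show "\<exists>u v. u \<noteq> v \<and> x = {u, v} \<and> u \<in> verts ?S \<and> v \<in> verts ?S"
      using g(2) by (intro exI[of _ u] exI[of _ "g e"]) auto
  qed
  then have "subgraph ?S G"
    using H(2) g(2) adj unfolding subgraph_def by auto
  moreover have "is_subdivision_of ?S H"
    unfolding is_subdivision_of_def
    using g by (intro exI[of _ "\<lambda>x. x"] exI[of _ g]) auto
  ultimately show ?thesis
    by blast
qed

lemma subdivision_from_pairs: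
  assumes wf: "wf_graph G" and "X \<subseteq> verts G" "Y \<subseteq> verts G" "X \<inter> Y = {}"
    and p: "\<And>y. y \<in> Y \<Longrightarrow> p y \<subseteq> nbrs G y \<inter> X \<and> card (p y) = 2"
    and many: "k * card X < card (p ` Y)"
  shows "\<exists>H S. wf_graph H \<and> min_degree_at_least k H \<and> is_subdivision_of S H \<and> subgraph S G"
proof -
  let ?H = "(X, p ` Y)"
  have "wf_graph ?H"
    unfolding wf_graph_def
  proof (intro conjI ballI)
    show "finite (verts ?H)"
      using assms(2) wf by (simp add: finite_subset wf_graph_finite_verts)
    fix e assume "e \<in> edges ?H"
    then obtain y where "y \<in> Y" "e = p y"
      by auto
    with p[of y] obtain a b where "a \<noteq> b" "e = {a, b}" "{a, b} \<subseteq> X"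
      by (auto simp: card_2_iff)
    then show "\<exists>u v. u \<noteq> v \<and> e = {u, v} \<and> u \<in> verts ?H \<and> v \<in> verts ?H"
      by auto
  qed
  moreover have "k * card (verts ?H) < card (edges ?H)"
    using many by simp
  ultimately obtain H where H: "subgraph H ?H" "min_degree_at_least k H"
    using dense_graph_has_min_degree_subgraph by blast
  have EH: "edges H \<subseteq> p ` Y" and VH: "verts H \<subseteq> X"
    using H(1) unfolding subgraph_def by auto
  let ?g = "inv_into Y p"
  have g: "?g e \<in> Y" "p (?g e) = e" if "e \<in> edges H" for e
    using EH that by (simp_all add: inv_into_into f_inv_into_f subset_iff)
  have "\<exists>S. subgraph S G \<and> is_subdivision_of S H"
  proof (rule subdivision_subgraph)
    show "wf_graph H" "verts H \<subseteq> verts G"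
      using H(1) VH assms(2) subgraph_wf by auto
    show "inj_on ?g (edges H)"
      using inj_on_inv_into inj_on_subset EH by blast
    show "?g ` edges H \<subseteq> verts G - verts H"
      using g(1) assms(3,4) VH by blast
    show "\<forall>e\<in>edges H. \<forall>u\<in>e. {u, ?g e} \<in> edges G"
      using g p unfolding nbrs_def by (fastforce simp: insert_commute)
  qed
  then show ?thesis
    using H subgraph_wf by blast
qed

lemma K2s_or_subdivision_from_pairs:
  assumes wf: "wf_graph G" and "X \<subseteq> verts G" "Y \<subseteq> verts G" "X \<inter> Y = {}"
    and two: "\<forall>y\<in>Y. 2 \<le> card (nbrs G y \<inter> X)"
    and many: "(s - 1) * k * card X < card Y"
  shows "(\<exists>K. subgraph K G \<and> is_K2s s K) \<or>
         (\<exists>H S. wf_graph H \<and> min_degree_at_least k H \<and> is_subdivision_of S H \<and> subgraph S G)"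
proof -
  have "finite Y"
    using assms(3) wf by (meson finite_subset wf_graph_finite_verts)
  have "\<forall>y\<in>Y. \<exists>P. P \<subseteq> nbrs G y \<inter> X \<and> card P = 2"
    using two by (meson obtain_subset_with_card_n)
  then obtain p where p: "\<And>y. y \<in> Y \<Longrightarrow> p y \<subseteq> nbrs G y \<inter> X \<and> card (p y) = 2"
    by metis
  show ?thesis
  proof (cases "\<exists>y0\<in>Y. s \<le> card {y \<in> Y. p y = p y0}")
    case True
    then obtain y0 T where "y0 \<in> Y" "T \<subseteq> {y \<in> Y. p y = p y0}" "card T = s"
      by (meson obtain_subset_with_card_n)
    then have T: "T \<subseteq> Y" "\<forall>y\<in>T. p y = p y0"
      by auto
    then have "finite T"
      using \<open>finite Y\<close> finite_subset by blast
    have "p y0 \<union> T \<subseteq> verts G" "p y0 \<inter> T = {}"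
      using p[OF \<open>y0 \<in> Y\<close>] T(1) assms(2-4) by auto
    moreover have "\<forall>a\<in>p y0. \<forall>b\<in>T. {a, b} \<in> edges G"
      using T p unfolding nbrs_def by (fastforce simp: insert_commute)
    ultimately have "\<exists>K. subgraph K G \<and> is_K2s s K"
      using K2s_subgraph p[OF \<open>y0 \<in> Y\<close>] \<open>finite T\<close> \<open>card T = s\<close> by blast
    then show ?thesis ..
  next
    case False
    have "card Y = (\<Sum>e\<in>p ` Y. card {y \<in> Y. p y = e})"
      using sum.image_gen[OF \<open>finite Y\<close>, of "\<lambda>_. 1::nat" p] by simp
    also have "\<dots> \<le> (\<Sum>e\<in>p ` Y. s - 1)"
      using False by (intro sum_mono) (auto simp: not_le)
    finally have "card Y \<le> (s - 1) * card (p ` Y)"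
      by (simp add: mult.commute)
    then have "(s - 1) * (k * card X) < (s - 1) * card (p ` Y)"
      using many[unfolded mult.assoc] by linarith
    then have "k * card X < card (p ` Y)"
      by simp
    then show ?thesis
      using subdivision_from_pairs[OF assms(1-4) p] by blast
  qed
qed

lemma exists_ge_average:
  fixes f :: "'a \<Rightarrow> nat"
  assumes "finite A" "A \<noteq> {}"
  shows "\<exists>a\<in>A. sum f A \<le> card A * f a"
proof -
  have "Max (f ` A) \<in> f ` A"
    using assms by simp
  then obtain a where a: "a \<in> A" "f a = Max (f ` A)"
    by (metis imageE)
  then have "\<And>x. x \<in> A \<Longrightarrow> f x \<le> f a"
    using assms(1) by simp
  then show ?thesis
    using a(1) sum_bounded_above[of A f "f a"] by auto
qed

lemma exists_vertex_adjacent_to_many: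
  assumes "finite U" "finite R" "U \<noteq> {}"
    and deg: "\<forall>w\<in>R. D \<le> card (nbrs G w \<inter> U)"
  shows "\<exists>u\<in>U. card R * D \<le> card U * card {w \<in> R. u \<in> nbrs G w}"
proof -
  have "card R * D = (\<Sum>w\<in>R. D)"
    by simp
  also have "\<dots> \<le> (\<Sum>w\<in>R. card {u \<in> U. u \<in> nbrs G w})"
    using deg by (intro sum_mono) (simp add: Int_def conj_commute)
  also have "\<dots> = (\<Sum>u\<in>U. card {w \<in> R. u \<in> nbrs G w})"
    using sum.swap_restrict[OF assms(2,1), of "\<lambda>_ _. 1::nat" "\<lambda>w u. u \<in> nbrs G w"] by simp
  finally show ?thesis
    using exists_ge_average[OF assms(1,3)] order_trans by blast
qed

lemma greedy_step_bound:
  fixes a r r' c N Q D :: nat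
  assumes "a \<le> r" "a * Q \<le> r' * N" "r * D \<le> N * c" "r = r' + c"
  shows "a * (Q + D) \<le> r * N"
proof -
  have "a * (Q + D) \<le> r' * N + r * D"
    using assms(1,2) by (simp add: add_mult_distrib2 add_mono)
  also have "\<dots> \<le> r' * N + c * N"
    using assms(3) by (simp add: mult.commute)
  also have "\<dots> = r * N"
    using assms(4) by (simp add: add_mult_distrib)
  finally show ?thesis .
qed

text \<open>Greedy domination: each chosen vertex is adjacent to at least a \<open>D / |U|\<close> fraction of the
  vertices of \<open>R\<close> not yet dominated, so after \<open>t\<close> steps at most a \<open>|U| / (|U| + t D)\<close> fraction
  is left.\<close>
lemma greedy_partial_domination:
  assumes "finite U" "finite R" "\<forall>w\<in>R. D \<le> card (nbrs G w \<inter> U)"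
  shows "\<exists>X\<subseteq>U. card X \<le> t \<and>
    card {w \<in> R. nbrs G w \<inter> X = {}} * (card U + t * D) \<le> card R * card U"
  using assms(2,3)
proof (induction t arbitrary: R)
  case 0
  then show ?case
    by (intro exI[of _ "{}"]) (simp add: mult.commute)
next
  case (Suc t)
  show ?case
  proof (cases "R = {} \<or> U = {}")
    case True
    then have "R = {} \<or> D = 0"
      using Suc.prems(2) by auto
    then show ?thesis
      by (intro exI[of _ "{}"]) auto
  next
    case False
    then obtain u where u: "u \<in> U" "card R * D \<le> card U * card {w \<in> R. u \<in> nbrs G w}"
      using exists_vertex_adjacent_to_many[OF assms(1) Suc.prems(1) _ Suc.prems(2)] by blast
    let ?C = "{w \<in> R. u \<in> nbrs G w}"
    let ?R' = "R - ?C"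
    obtain X where X: "X \<subseteq> U" "card X \<le> t"
      "card {w \<in> ?R'. nbrs G w \<inter> X = {}} * (card U + t * D) \<le> card ?R' * card U"
      using Suc.IH[of ?R'] Suc.prems by auto
    let ?a = "card {w \<in> ?R'. nbrs G w \<inter> X = {}}"
    have undom: "{w \<in> R. nbrs G w \<inter> insert u X = {}} = {w \<in> ?R'. nbrs G w \<inter> X = {}}"
      by auto
    have "?a \<le> card R"
      using Suc.prems(1) by (intro card_mono) auto
    moreover have "card R = card ?R' + card ?C"
      using Suc.prems(1) by (simp add: card_Diff_subset card_mono)
    ultimately have bound: "?a * (card U + t * D + D) \<le> card R * card U"
      using greedy_step_bound[OF _ X(3) u(2)] by blast
    have "finite X"
      using X(1) assms(1) by (rule finite_subset)
    then have "card (insert u X) \<le> Suc t"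
      using X(2) by (simp add: card_insert_if)
    then show ?thesis
      using X(1) u(1) undom bound by (intro exI[of _ "insert u X"]) (simp add: ac_simps)
  qed
qed

text \<open>That is, \<open>|X| \<le> t + |W| |U| / (t D)\<close>: the \<open>t\<close> greedy choices, plus one neighbour of each
  vertex they leave undominated.\<close>
lemma small_dominating_set:
  assumes "finite U" "finite W" and deg: "\<forall>w\<in>W. D \<le> card (nbrs G w \<inter> U)" and "0 < D"
  shows "\<exists>X\<subseteq>U. card X * (t * D) \<le> t * t * D + card W * card U \<and> (\<forall>w\<in>W. nbrs G w \<inter> X \<noteq> {})"
proof -
  obtain X0 where X0: "X0 \<subseteq> U" "card X0 \<le> t"
    "card {w \<in> W. nbrs G w \<inter> X0 = {}} * (card U + t * D) \<le> card W * card U"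
    using greedy_partial_domination[OF assms(1,2) deg] by blast
  define R where "R = {w \<in> W. nbrs G w \<inter> X0 = {}}"
  have "\<forall>w\<in>R. \<exists>u. u \<in> nbrs G w \<inter> U"
    using deg \<open>0 < D\<close> unfolding R_def by (metis (mono_tags) card.empty ex_in_conv mem_Collect_eq not_le)
  then obtain h where h: "\<And>w. w \<in> R \<Longrightarrow> h w \<in> nbrs G w \<inter> U"
    by metis
  let ?X = "X0 \<union> h ` R"
  have "finite R"
    using assms(2) by (simp add: R_def)
  then have "card ?X \<le> t + card R"
    using X0(2) card_Un_le[of X0 "h ` R"] card_image_le[of R h] by linarith
  then have "card ?X * (t * D) \<le> t * t * D + card R * (t * D)"
    by (metis add_mult_distrib mult.assoc mult_le_mono1)
  also have "card R * (t * D) \<le> card W * card U"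
    using X0(3) unfolding R_def[symmetric] by (meson le_add2 mult_le_mono2 order_trans)
  finally have "card ?X * (t * D) \<le> t * t * D + card W * card U"
    by simp
  moreover have "\<forall>w\<in>W. nbrs G w \<inter> ?X \<noteq> {}"
    using h unfolding R_def by blast
  moreover have "?X \<subseteq> U"
    using X0(1) h by blast
  ultimately show ?thesis
    by blast
qed

lemma two_le_card_Int_Un:
  assumes "finite (X \<union> Y)" "X \<inter> Y = {}" "A \<inter> X \<noteq> {}" "A \<inter> Y \<noteq> {}"
  shows "2 \<le> card (A \<inter> (X \<union> Y))"
proof -
  obtain a b where "a \<in> A \<inter> X" "b \<in> A \<inter> Y"
    using assms(3,4) by blast
  then have "a \<noteq> b" "{a, b} \<subseteq> A \<inter> (X \<union> Y)"
    using assms(2) by auto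
  then show ?thesis
    using card_mono[of "A \<inter> (X \<union> Y)" "{a, b}"] assms(1) by simp
qed

text \<open>Dominate \<open>W\<close> once, then dominate again the vertices of \<open>W\<close> that have only one neighbour
  in the first set, using vertices outside it.\<close>
lemma small_2_dominating_set:
  assumes "finite U" "finite W" and deg: "\<forall>w\<in>W. D + 1 \<le> card (nbrs G w \<inter> U)" and "0 < D"
  shows "\<exists>X\<subseteq>U. card X * (t * D) \<le> 2 * (t * t * D + card W * card U) \<and>
    (\<forall>w\<in>W. 2 \<le> card (nbrs G w \<inter> X))"
proof -
  have deg1: "\<forall>w\<in>W. D \<le> card (nbrs G w \<inter> U)"
    using deg by auto
  obtain X1 where X1: "X1 \<subseteq> U" "card X1 * (t * D) \<le> t * t * D + card W * card U"
    "\<forall>w\<in>W. nbrs G w \<inter> X1 \<noteq> {}"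
    using small_dominating_set[OF assms(1,2) deg1 \<open>0 < D\<close>, of t] by blast
  define W2 where "W2 = {w \<in> W. card (nbrs G w \<inter> X1) \<le> 1}"
  have deg2: "\<forall>w\<in>W2. D \<le> card (nbrs G w \<inter> (U - X1))"
  proof
    fix w assume w: "w \<in> W2"
    have "nbrs G w \<inter> U = nbrs G w \<inter> (U - X1) \<union> nbrs G w \<inter> X1"
      using X1(1) by blast
    then have "card (nbrs G w \<inter> U) \<le> card (nbrs G w \<inter> (U - X1)) + card (nbrs G w \<inter> X1)"
      by (metis card_Un_le)
    moreover have "card (nbrs G w \<inter> X1) \<le> 1" "D + 1 \<le> card (nbrs G w \<inter> U)"
      using w deg by (auto simp: W2_def)
    ultimately show "D \<le> card (nbrs G w \<inter> (U - X1))"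
      by linarith
  qed
  have "finite (U - X1)" "finite W2"
    using assms(1,2) by (auto simp: W2_def)
  then obtain X2 where X2: "X2 \<subseteq> U - X1"
    "card X2 * (t * D) \<le> t * t * D + card W2 * card (U - X1)" "\<forall>w\<in>W2. nbrs G w \<inter> X2 \<noteq> {}"
    using small_dominating_set[OF _ _ deg2 \<open>0 < D\<close>, of t] by blast
  have "card W2 * card (U - X1) \<le> card W * card U"
    using assms(1,2) by (intro mult_le_mono card_mono) (auto simp: W2_def)
  have "card (X1 \<union> X2) * (t * D) \<le> (card X1 + card X2) * (t * D)"
    using card_Un_le by (rule mult_le_mono1)
  also have "\<dots> = card X1 * (t * D) + card X2 * (t * D)"
    by (rule add_mult_distrib)
  also have "\<dots> \<le> 2 * (t * t * D + card W * card U)"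
    unfolding mult_2 using X1(2) X2(2) \<open>card W2 * card (U - X1) \<le> _\<close> by linarith
  finally have "card (X1 \<union> X2) * (t * D) \<le> 2 * (t * t * D + card W * card U)" .
  moreover have "2 \<le> card (nbrs G w \<inter> (X1 \<union> X2))" if "w \<in> W" for w
  proof (cases "w \<in> W2")
    case True
    have "finite (X1 \<union> X2)" "X1 \<inter> X2 = {}"
      using X1(1) X2(1) assms(1) by (auto intro: finite_subset)
    then show ?thesis
      using X1(3)[rule_format, OF that] X2(3)[rule_format, OF True] by (rule two_le_card_Int_Un)
  next
    case False
    then have "2 \<le> card (nbrs G w \<inter> X1)"
      using that unfolding W2_def by simp
    also have "\<dots> \<le> card (nbrs G w \<inter> (X1 \<union> X2))"
      using X1(1) X2(1) assms(1) by (intro card_mono) (auto intro: finite_subset)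
    finally show ?thesis .
  qed
  ultimately show ?thesis
    using X1(1) X2(1) by (intro exI[of _ "X1 \<union> X2"]) auto
qed

lemma div_mult_bounds:
  fixes b m :: nat
  assumes "0 < m" "m \<le> b"
  shows "0 < b div m" "m * (b div m) \<le> b" "b < 2 * m * (b div m)"
proof -
  show "0 < b div m"
    using assms by (simp add: div_greater_zero_iff)
  moreover have "b = m * (b div m) + b mod m"
    by simp
  moreover have "b mod m < m"
    using assms(1) by simp
  moreover have "m \<le> m * (b div m)"
    using \<open>0 < b div m\<close> by simp
  ultimately show "m * (b div m) \<le> b" "b < 2 * m * (b div m)"
    by linarith+
qed

text \<open>With \<open>t\<close> about \<open>b / 4M\<close> greedy steps, both terms of the domination bound are at most
  \<open>b / 2M\<close>.\<close>
lemma domination_budget: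
  fixes M b v d x :: nat
  assumes "0 < t" "4 * M * t \<le> b" "b < 8 * M * t" "v < M * b" "32 * M ^ 3 \<le> d"
    and dom: "x * (t * d) \<le> 2 * (t * t * d + b * v)"
  shows "M * x \<le> b"
proof -
  have "0 < M"
    using assms(4) by (cases M) auto
  then have "0 < d"
    using order_less_le_trans[OF _ assms(5)] by simp
  have "v < M * (8 * M * t)"
    using assms(3,4) by (meson less_imp_le_nat mult_le_mono2 order_less_le_trans)
  then have "4 * M * v \<le> 32 * M ^ 3 * t"
    by (simp add: power3_eq_cube algebra_simps)
  also have "\<dots> \<le> d * t"
    using assms(5) by simp
  finally have Mv: "4 * M * v \<le> t * d"
    by (simp add: mult.commute)
  have "2 * (M * x * (t * d)) \<le> 2 * M * (2 * (t * t * d + b * v))"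
    using dom by (simp add: mult.assoc)
  also have "\<dots> = (4 * M * t) * (t * d) + (4 * M * v) * b"
    by (simp add: algebra_simps)
  also have "\<dots> \<le> b * (t * d) + (t * d) * b"
    using assms(2) Mv by (intro add_mono mult_le_mono1)
  also have "\<dots> = 2 * (b * (t * d))"
    by simp
  finally have "M * x * (t * d) \<le> b * (t * d)"
    by linarith
  then show ?thesis
    using \<open>0 < t\<close> \<open>0 < d\<close> by simp
qed

lemma card_insert_nbrs:
  assumes "wf_graph G"
  shows "card (insert v (nbrs G v)) = degree G v + 1"
  using assms by (simp add: degree_def wf_graph_finite_nbrs wf_graph_not_in_nbrs)

lemma high_degree_vertices_2_dominated:
  assumes wf: "wf_graph G" and B: "B \<subseteq> verts G" "\<forall>b\<in>B. d < degree G b"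
    and few: "card (verts G) < M * card B" and d: "32 * M ^ 3 \<le> d"
  shows "\<exists>X\<subseteq>verts G. X \<noteq> {} \<and> M * card X \<le> card B \<and> (\<forall>b\<in>B. 2 \<le> card (nbrs G b \<inter> X))"
proof -
  let ?V = "verts G"
  have "0 < M"
    using few by (cases M) auto
  obtain b where "b \<in> B"
    using few by fastforce
  have "insert b (nbrs G b) \<subseteq> ?V"
    using wf_graph_nbrs_subset[OF wf] B(1) \<open>b \<in> B\<close> by blast
  then have "degree G b + 1 \<le> card ?V"
    using card_mono[OF wf_graph_finite_verts[OF wf]] card_insert_nbrs[OF wf] by metis
  moreover have "4 * (M * M) \<le> d"
  proof -
    have "M * M \<le> M ^ 3"
      using \<open>0 < M\<close> by (simp add: power3_eq_cube)
    then show ?thesis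
      using d by linarith
  qed
  ultimately have "4 * (M * M) < M * card B"
    using B(2)[rule_format, OF \<open>b \<in> B\<close>] few by linarith
  then have "4 * M < card B" \<comment> \<open>so that at least one greedy step is taken below\<close>
    by (simp add: mult.left_commute)
  have deg: "\<forall>b\<in>B. d + 1 \<le> card (nbrs G b \<inter> ?V)"
    using B(2) wf_graph_nbrs_subset[OF wf] by (simp add: Int_absorb2 degree_def Suc_le_eq)
  have "0 < d"
    using \<open>0 < M\<close> order_less_le_trans[OF _ \<open>4 * (M * M) \<le> d\<close>] by simp
  have fin: "finite ?V" "finite B"
    using B(1) wf_graph_finite_verts[OF wf] finite_subset by auto
  define t where "t = card B div (4 * M)"
  obtain X where X: "X \<subseteq> ?V" "\<forall>b\<in>B. 2 \<le> card (nbrs G b \<inter> X)"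
    "card X * (t * d) \<le> 2 * (t * t * d + card B * card ?V)"
    using small_2_dominating_set[OF fin(1,2) deg \<open>0 < d\<close>, of t] by blast
  have "M * card X \<le> card B"
    using div_mult_bounds[of "4 * M" "card B", folded t_def] \<open>0 < M\<close> \<open>4 * M < card B\<close>
      domination_budget[OF _ _ _ few d X(3)] by simp
  moreover have "X \<noteq> {}"
    using X(2) \<open>b \<in> B\<close> by fastforce
  ultimately show ?thesis
    using X(1,2) by blast
qed

lemma no_removable_vertex_imp_two_high_nbrs:
  assumes "wf_graph G" "\<forall>v\<in>verts G. \<not> removable d G v" "v \<in> verts G" "degree G v \<le> d"
  shows "2 \<le> card (nbrs G v \<inter> {w \<in> verts G. d < degree G w})"
proof -
  have "{w \<in> nbrs G v. d < degree G w} = nbrs G v \<inter> {w \<in> verts G. d < degree G w}"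
    using wf_graph_nbrs_subset[OF assms(1)] by auto
  then show ?thesis
    using assms(2-4) unfolding removable_def by auto
qed

lemma no_removable_vertex_imp_K2s_or_subdivision:
  assumes wf: "wf_graph G" and "verts G \<noteq> {}" and nr: "\<forall>v\<in>verts G. \<not> removable d G v"
    and d: "32 * (s * k + 2) ^ 3 \<le> d"
  shows "(\<exists>K. subgraph K G \<and> is_K2s s K) \<or>
         (\<exists>H S. wf_graph H \<and> min_degree_at_least k H \<and> is_subdivision_of S H \<and> subgraph S G)"
proof -
  let ?V = "verts G"
  define B where "B = {v \<in> ?V. d < degree G v}"
  define M where "M = s * k + 2"
  have fin: "finite ?V" "finite B"
    using wf_graph_finite_verts[OF wf] by (auto simp: B_def)
  have B: "B \<subseteq> ?V" "\<forall>b\<in>B. d < degree G b"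
    by (auto simp: B_def)
  have low: "\<forall>v\<in>?V - B. 2 \<le> card (nbrs G v \<inter> B)"
    using no_removable_vertex_imp_two_high_nbrs[OF wf nr] unfolding B_def by (simp add: not_less)
  then have "B \<noteq> {}"
    using \<open>?V \<noteq> {}\<close> by fastforce
  have "(s - 1) * k < M - 1"
    unfolding M_def by (simp add: diff_mult_distrib le_imp_less_Suc)
  then have pairs: "(s - 1) * k * n < (M - 1) * n" if "0 < n" for n
    using that by simp
  consider "M * card B \<le> card ?V" | "card ?V < M * card B"
    by linarith
  then show ?thesis
  proof cases
    case 1
    have "card ?V = card B + card (?V - B)"
      using fin by (simp add: B_def card_Diff_subset card_mono)
    with 1 have "(M - 1) * card B \<le> card (?V - B)"
      by (simp add: diff_mult_distrib)
    moreover have "0 < card B"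
      using \<open>B \<noteq> {}\<close> fin(2) by (simp add: card_gt_0_iff)
    ultimately have "(s - 1) * k * card B < card (?V - B)"
      using pairs[of "card B"] by linarith
    then show ?thesis
      using K2s_or_subdivision_from_pairs[OF wf B(1) Diff_subset Diff_disjoint low] by blast
  next
    case 2
    obtain X where X: "X \<subseteq> ?V" "X \<noteq> {}" "M * card X \<le> card B"
      "\<forall>b\<in>B. 2 \<le> card (nbrs G b \<inter> X)"
      using high_degree_vertices_2_dominated[OF wf B 2 d[folded M_def]] by blast
    have "finite X"
      using X(1) fin(1) by (rule finite_subset)
    then have "(M - 1) * card X \<le> card (B - X)" "0 < card X"
      using X(2,3) diff_card_le_card_Diff[of X B] by (simp_all add: diff_mult_distrib card_gt_0_iff)
    then have "(s - 1) * k * card X < card (B - X)"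
      using pairs[of "card X"] by linarith
    moreover have "B - X \<subseteq> ?V" "\<forall>y\<in>B - X. 2 \<le> card (nbrs G y \<inter> X)"
      using B(1) X(4) by auto
    ultimately show ?thesis
      using K2s_or_subdivision_from_pairs[OF wf X(1) _ Diff_disjoint] by blast
  qed
qed

lemma not_strongly_degenerate_imp_K2s_or_subdivision:
  assumes "wf_graph G" "\<not> strongly_degenerate d G" "32 * (s * k + 2) ^ 3 \<le> d"
  shows "(\<exists>K. subgraph K G \<and> is_K2s s K) \<or>
         (\<exists>H S. wf_graph H \<and> min_degree_at_least k H \<and> is_subdivision_of S H \<and> subgraph S G)"
proof -
  obtain G' where G': "subgraph G' G" "verts G' \<noteq> {}" "\<forall>v\<in>verts G'. \<not> removable d G' v"
    using assms(2) unfolding strongly_degenerate_def by blast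
  show ?thesis
    using no_removable_vertex_imp_K2s_or_subdivision[OF subgraph_wf[OF G'(1)] G'(2,3) assms(3)]
      subgraph_trans[OF _ G'(1)] by blast
qed

lemma graph_iso_imp_image:
  assumes "wf_graph G" "wf_graph G'" "graph_iso G G'"
  obtains f where "inj_on f (verts G)" "verts G' = f ` verts G" "edges G' = (\<lambda>e. f ` e) ` edges G"
proof -
  obtain f where bij: "bij_betw f (verts G) (verts G')"
    and adj: "\<forall>u\<in>verts G. \<forall>v\<in>verts G. {u, v} \<in> edges G \<longleftrightarrow> {f u, f v} \<in> edges G'"
    using assms(3) unfolding graph_iso_def by blast
  have V: "verts G' = f ` verts G"
    using bij by (simp add: bij_betw_def)
  have "edges G' = (\<lambda>e. f ` e) ` edges G"
  proof (intro equalityI subsetI)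
    fix e assume e: "e \<in> edges G'"
    then obtain a b where ab: "e = {a, b}" "a \<in> verts G'" "b \<in> verts G'"
      using assms(2) by (elim wf_graph_edgeE) blast
    then obtain u v where uv: "u \<in> verts G" "v \<in> verts G" "a = f u" "b = f v"
      using V by blast
    then have "{u, v} \<in> edges G"
      using adj e ab(1) by simp
    moreover have "e = f ` {u, v}"
      using ab(1) uv by simp
    ultimately show "e \<in> (\<lambda>e. f ` e) ` edges G"
      by blast
  next
    fix e assume "e \<in> (\<lambda>e. f ` e) ` edges G"
    then obtain e0 where e0: "e0 \<in> edges G" "e = f ` e0"
      by blast
    then obtain u v where "e0 = {u, v}" "u \<in> verts G" "v \<in> verts G"
      using assms(1) by (elim wf_graph_edgeE) blast
    then show "e \<in> edges G'"
      using adj e0 by simp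
  qed
  with V bij show ?thesis
    using that unfolding bij_betw_def by blast
qed

lemma is_K2s_graph_iso:
  assumes "wf_graph G" "wf_graph G'" "graph_iso G G'" "is_K2s s G"
  shows "is_K2s s G'"
proof -
  obtain f where f: "inj_on f (verts G)" "verts G' = f ` verts G" "edges G' = (\<lambda>e. f ` e) ` edges G"
    using graph_iso_imp_image[OF assms(1-3)] by blast
  obtain A B where AB: "verts G = A \<union> B" "A \<inter> B = {}" "card A = 2" "finite B" "card B = s"
    "edges G = {{a, b} | a b. a \<in> A \<and> b \<in> B}"
    using assms(4) unfolding is_K2s_def by blast
  have inj: "inj_on f A" "inj_on f B"
    using f(1) AB(1) inj_on_Un by auto
  have "edges G' = {{a, b} | a b. a \<in> f ` A \<and> b \<in> f ` B}"
    unfolding f(3) AB(6)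
  proof (intro equalityI subsetI)
    fix e assume "e \<in> {{a, b} | a b. a \<in> f ` A \<and> b \<in> f ` B}"
    then obtain a b where "a \<in> A" "b \<in> B" "e = f ` {a, b}"
      by auto
    then show "e \<in> (\<lambda>e. f ` e) ` {{a, b} | a b. a \<in> A \<and> b \<in> B}"
      by blast
  qed auto
  moreover have "f ` A \<inter> f ` B = {}"
    using f(1) AB(1,2) by (auto simp: inj_on_def)
  ultimately show ?thesis
    unfolding is_K2s_def using f(2) AB inj
    by (intro exI[of _ "f ` A", OF exI[of _ "f ` B"]]) (simp add: card_image image_Un)
qed

lemma is_subdivision_of_graph_iso:
  assumes "wf_graph S" "wf_graph S'" "graph_iso S S'" "is_subdivision_of S H"
  shows "is_subdivision_of S' H"
proof -
  obtain f where f: "inj_on f (verts S)" "verts S' = f ` verts S" "edges S' = (\<lambda>e. f ` e) ` edges S"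
    using graph_iso_imp_image[OF assms(1-3)] by blast
  obtain a b where ab: "inj_on a (verts H)" "inj_on b (edges H)"
      "a ` verts H \<inter> b ` edges H = {}" "verts S = a ` verts H \<union> b ` edges H"
      "edges S = {{a u, b e} | u e. e \<in> edges H \<and> u \<in> e}"
    using assms(4) unfolding is_subdivision_of_def by (elim exE conjE) (rule that)
  have "inj_on (f \<circ> a) (verts H)" "inj_on (f \<circ> b) (edges H)"
    using comp_inj_on[OF ab(1) inj_on_subset[OF f(1)]] comp_inj_on[OF ab(2) inj_on_subset[OF f(1)]]
      ab(4) by auto
  moreover have "(f \<circ> a) ` verts H \<inter> (f \<circ> b) ` edges H = {}"
    using inj_on_image_Int[OF f(1), of "a ` verts H" "b ` edges H"] ab(3,4)
    by (simp add: image_comp)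
  moreover have "verts S' = (f \<circ> a) ` verts H \<union> (f \<circ> b) ` edges H"
    using f(2) ab(4) by (simp add: image_Un image_comp)
  moreover have "edges S' = {{(f \<circ> a) u, (f \<circ> b) e} | u e. e \<in> edges H \<and> u \<in> e}"
    unfolding f(3) ab(5)
  proof (intro equalityI subsetI)
    fix x assume "x \<in> {{(f \<circ> a) u, (f \<circ> b) e} | u e. e \<in> edges H \<and> u \<in> e}"
    then obtain u e where "e \<in> edges H" "u \<in> e" "x = f ` {a u, b e}"
      by auto
    then show "x \<in> (\<lambda>e. f ` e) ` {{a u, b e} | u e. e \<in> edges H \<and> u \<in> e}"
      by blast
  qed auto
  ultimately show ?thesis
    unfolding is_subdivision_of_def
    by (intro exI[of _ "f \<circ> a", OF exI[of _ "f \<circ> b"]]) (simp add: ab(1,2))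
qed

lemma K2s_not_strongly_degenerate:
  assumes "wf_graph G" "is_K2s (d + 1) G"
  shows "\<not> strongly_degenerate d G"
proof
  assume sd: "strongly_degenerate d G"
  obtain A B where AB: "verts G = A \<union> B" "A \<inter> B = {}" "card A = 2" "finite B" "card B = d + 1"
    "edges G = {{a, b} | a b. a \<in> A \<and> b \<in> B}"
    using assms(2) unfolding is_K2s_def by (elim exE conjE) (rule that)
  have nbrs_A: "nbrs G v = B" if "v \<in> A" for v
    using that AB(2) unfolding nbrs_def AB(6) by (auto simp: doubleton_eq_iff)
  have nbrs_B: "nbrs G v = A" if "v \<in> B" for v
    using that AB(2) unfolding nbrs_def AB(6) by (auto simp: doubleton_eq_iff)
  have "verts G \<noteq> {}"
    using AB(1,3) by auto
  then obtain v where v: "v \<in> verts G" "removable d G v"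
    using sd subgraph_refl[OF assms(1)] unfolding strongly_degenerate_def by blast
  have deg_A: "degree G a = d + 1" if "a \<in> A" for a
    using nbrs_A[OF that] AB(5) by (simp add: degree_def)
  show False
  proof (cases "v \<in> A")
    case True
    then show False
      using v(2) deg_A unfolding removable_def by simp
  next
    case False
    then have "{w \<in> nbrs G v. degree G w > d} = A"
      using v(1) AB(1) nbrs_B deg_A by auto
    then show False
      using v(2) AB(3) unfolding removable_def by simp
  qed
qed

lemma subdivision_nbrs:
  assumes "wf_graph H" "is_subdivision_of S H"
  obtains f g where "inj_on f (verts H)" "verts S = f ` verts H \<union> g ` edges H"
    "\<And>u. u \<in> verts H \<Longrightarrow> degree S (f u) = degree H u"
    "\<And>e. e \<in> edges H \<Longrightarrow> nbrs S (g e) = f ` e"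
proof -
  obtain f g where fg: "inj_on f (verts H)" "inj_on g (edges H)"
      "f ` verts H \<inter> g ` edges H = {}" "verts S = f ` verts H \<union> g ` edges H"
      "edges S = {{f u, g e} | u e. e \<in> edges H \<and> u \<in> e}"
    using assms(2) unfolding is_subdivision_of_def by (elim exE conjE) (rule that)
  have branch: "f u \<noteq> g e" if "u \<in> verts H" "e \<in> edges H" for u e
    using fg(3) that by blast
  have edge_verts: "e \<subseteq> verts H" if "e \<in> edges H" for e
    using assms(1) that by (rule wf_graph_edge_subset)
  have "nbrs S (f u) = g ` {e \<in> edges H. u \<in> e}" if u: "u \<in> verts H" for u
  proof (intro equalityI subsetI)
    fix x assume "x \<in> nbrs S (f u)"
    then obtain u' e where ue: "{f u, x} = {f u', g e}" "e \<in> edges H" "u' \<in> e"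
      unfolding nbrs_def fg(5) by auto
    then have "f u = f u'" "x = g e"
      using branch[OF u ue(2)] unfolding doubleton_eq_iff by blast+
    moreover have "u' \<in> verts H"
      using edge_verts[OF ue(2)] ue(3) by blast
    ultimately have "u = u'"
      using inj_onD[OF fg(1) _ u] by blast
    then show "x \<in> g ` {e \<in> edges H. u \<in> e}"
      using ue \<open>x = g e\<close> by blast
  qed (auto simp: nbrs_def fg(5))
  then have "degree S (f u) = degree H u" if "u \<in> verts H" for u
    using that card_incident_edges[OF assms(1)] inj_on_subset[OF fg(2)]
    by (simp add: degree_def card_image)
  moreover have "nbrs S (g e) = f ` e" if e: "e \<in> edges H" for e
  proof (intro equalityI subsetI)
    fix x assume "x \<in> nbrs S (g e)"
    then obtain u e' where ue: "{g e, x} = {f u, g e'}" "e' \<in> edges H" "u \<in> e'"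
      unfolding nbrs_def fg(5) by auto
    moreover have "g e \<noteq> f u"
      using branch e edge_verts[OF ue(2)] ue(3) by fastforce
    ultimately have "g e = g e'" "x = f u"
      unfolding doubleton_eq_iff by blast+
    then have "e = e'"
      using inj_onD[OF fg(2) _ e ue(2)] by blast
    then show "x \<in> f ` e"
      using ue(3) \<open>x = f u\<close> by blast
  next
    fix x assume "x \<in> f ` e"
    then show "x \<in> nbrs S (g e)"
      unfolding nbrs_def fg(5) using e by (auto simp: insert_commute)
  qed
  ultimately show ?thesis
    using that fg(1,4) by blast
qed

lemma subdivision_not_strongly_degenerate:
  assumes "wf_graph H" "wf_graph S" "min_degree_at_least (d + 1) H" "is_subdivision_of S H"
  shows "\<not> strongly_degenerate d S"
proof
  assume sd: "strongly_degenerate d S"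
  obtain f g where f: "inj_on f (verts H)" and V: "verts S = f ` verts H \<union> g ` edges H"
    and deg: "\<And>u. u \<in> verts H \<Longrightarrow> degree S (f u) = degree H u"
    and nbrs_g: "\<And>e. e \<in> edges H \<Longrightarrow> nbrs S (g e) = f ` e"
    using subdivision_nbrs[OF assms(1,4)] by blast
  have high: "d < degree S (f u)" if "u \<in> verts H" for u
    using deg[OF that] assms(3) that unfolding min_degree_at_least_def by fastforce
  have "verts S \<noteq> {}"
    using assms(3) V unfolding min_degree_at_least_def by blast
  then obtain v where v: "v \<in> verts S" "removable d S v"
    using sd subgraph_refl[OF assms(2)] unfolding strongly_degenerate_def by blast
  show False
  proof (cases "v \<in> f ` verts H")
    case True
    then show False
      using v(2) high unfolding removable_def by fastforce
  next
    case False
    then obtain e where e: "e \<in> edges H" "v = g e"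
      using v(1) V by blast
    then obtain a b where ab: "a \<noteq> b" "e = {a, b}" "a \<in> verts H" "b \<in> verts H"
      using assms(1) by (elim wf_graph_edgeE) blast
    then have "{w \<in> nbrs S v. degree S w > d} = {f a, f b}" "f a \<noteq> f b"
      using nbrs_g[OF e(1)] e(2) high f by (auto simp: inj_on_def)
    then show False
      using v(2) unfolding removable_def by simp
  qed
qed

lemma subgraph_closedE:
  assumes "subgraph_closed \<G>" "G \<in> \<G>" "subgraph K G"
  obtains K' where "K' \<in> \<G>" "wf_graph K" "wf_graph K'" "graph_iso K K'"
  using assms subgraph_wf unfolding subgraph_closed_def by blast

lemma strongly_degenerate_if_K2s_and_subdivisions_excluded:
  assumes closed: "subgraph_closed \<G>" and "G \<in> \<G>"
    and no_K2s: "\<not> (\<exists>G\<in>\<G>. is_K2s s G)"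
    and no_subdivision: "\<forall>H S. wf_graph H \<and> min_degree_at_least k H \<and> is_subdivision_of S H \<longrightarrow> S \<notin> \<G>"
  shows "strongly_degenerate (32 * (s * k + 2) ^ 3) G"
proof (rule ccontr)
  assume "\<not> strongly_degenerate (32 * (s * k + 2) ^ 3) G"
  moreover have "wf_graph G"
    using closed \<open>G \<in> \<G>\<close> unfolding subgraph_closed_def by blast
  ultimately consider K where "subgraph K G" "is_K2s s K"
    | H S where "wf_graph H" "min_degree_at_least k H" "is_subdivision_of S H" "subgraph S G"
    using not_strongly_degenerate_imp_K2s_or_subdivision by blast
  then show False
  proof cases
    case (1 K)
    then obtain K' where "K' \<in> \<G>" "is_K2s s K'"
      using subgraph_closedE[OF closed \<open>G \<in> \<G>\<close>] is_K2s_graph_iso by metis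
    then show False
      using no_K2s by blast
  next
    case (2 H S)
    then obtain S' where "S' \<in> \<G>" "is_subdivision_of S' H"
      using subgraph_closedE[OF closed \<open>G \<in> \<G>\<close>] is_subdivision_of_graph_iso by metis
    then show False
      using no_subdivision \<open>wf_graph H\<close> \<open>min_degree_at_least k H\<close> by blast
  qed
qed

theorem theorem1p2:
  assumes "subgraph_closed \<G>"
  shows "(\<exists>d::nat. d \<ge> 1 \<and> (\<forall>G\<in>\<G>. strongly_degenerate d G)) \<longleftrightarrow>
         (\<exists>s k :: nat. \<not> (\<exists>G\<in>\<G>. is_K2s s G) \<and>
            (\<forall>H S. wf_graph H \<and> min_degree_at_least k H \<and> is_subdivision_of S H \<longrightarrow> S \<notin> \<G>))"
proof
  assume "\<exists>d::nat. d \<ge> 1 \<and> (\<forall>G\<in>\<G>. strongly_degenerate d G)"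
  then obtain d where "\<forall>G\<in>\<G>. strongly_degenerate d G"
    by blast
  moreover have "\<forall>G\<in>\<G>. wf_graph G"
    using assms unfolding subgraph_closed_def by blast
  ultimately show "\<exists>s k. \<not> (\<exists>G\<in>\<G>. is_K2s s G) \<and>
      (\<forall>H S. wf_graph H \<and> min_degree_at_least k H \<and> is_subdivision_of S H \<longrightarrow> S \<notin> \<G>)"
    using K2s_not_strongly_degenerate subdivision_not_strongly_degenerate by blast
next
  assume "\<exists>s k. \<not> (\<exists>G\<in>\<G>. is_K2s s G) \<and>
      (\<forall>H S. wf_graph H \<and> min_degree_at_least k H \<and> is_subdivision_of S H \<longrightarrow> S \<notin> \<G>)"
  then obtain s k where "\<forall>G\<in>\<G>. strongly_degenerate (32 * (s * k + 2) ^ 3) G"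
    using strongly_degenerate_if_K2s_and_subdivisions_excluded[OF assms] by blast
  then show "\<exists>d::nat. d \<ge> 1 \<and> (\<forall>G\<in>\<G>. strongly_degenerate d G)"
    by (intro exI[of _ "32 * (s * k + 2) ^ 3"]) simp
qed

end
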